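(* Let $(\Theta,\mathcal{B},\mu,\omega)$ be a metric dynamical system, $V_r\in[0,1)$, and $F:\Theta\times\mathbb{R}\to\mathbb{R}$ measurable with $\int_0^1\|F(\theta\cdot t,\cdot)\|_{[0,1],0,1}\,dt<\infty$ for all $\theta\in\Theta$, such that $\dot x(t)=F(\theta\cdot t,x(t))$ has global solutions, and suppose $F(\theta,x)$ is non-increasing in $x$ for each $\theta$. Let $\widehat V$ be the lifted potential semiflow defined below. Then $$\widehat V_t(\theta,x_1)\le\widehat V_t(\theta,x_2)+K\quad\text{for all }t\ge0,\ \theta\in\Theta,\ x_1,x_2\in\mathbb{R}\text{ with }x_1\le x_2,$$ where $K=\frac{V_r}{1-V_r}+1$.
   Context: A metric dynamical system $(\Theta,\mathcal{B},\mu,\omega)$: probability space with a measurable $\mu$-preserving flow $\omega:\mathbb{R}\times\Theta\to\Theta$, written $\theta\cdot t$. For $f:\mathbb{R}\to\mathbb{R}$, $\|f\|_{[0,1],0,1}=\sup_{x\in[0,1]}|f(x)|+\sup_{x\ne y\in[0,1]}\frac{|f(y)-f(x)|}{|y-x|}$. $\varphi_t(\theta,x)$ denotes the solution at time $t$ of $\dot x(t)=F(\theta\cdot t,x(t))$ with $x(0)=x$. Definition of $\widehat V$: for $x\in\mathbb{R}$ let $[x]$ be its integer part and $\{x\}=x-[x]\in[0,1)$. Let $\tau(\theta,x)=\inf\{t\ge0:\varphi_t(\theta,\{x\})=1\}$ (with $\inf\emptyset=\infty$). For $(\theta,x)$ define $s_0=0$, $s_1=\tau(\theta,x)$, $S_n=S_n(\theta,x)=\sum_{i=0}^n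 s_i$, and $s_{n+1}=\tau(\theta\cdot S_n,V_r)$. Let $n(t,\theta,x)=\max\{n\ge0: S_n(\theta,x)\le t\}$. For $t\ge0$ set $\widehat V_t(\theta,x)=[x]+\varphi_t(\theta,\{x\})$ if $n(t,\theta,x)=0$, and $\widehat V_t(\theta,x)=[x]+n+\varphi_{t-S_n}(\theta\cdot S_n,V_r)$ if $n(t,\theta,x)=n\ge1$. *)

theory Defs
  imports "HOL-Probability.Probability"
begin

text \<open>Metric dynamical system: a probability space M with a measurable,
  measure-preserving flow; theta \<cdot> t is written  omega t theta.\<close>
definition metric_dynamical_system :: "'a measure \<Rightarrow> (real \<Rightarrow> 'a \<Rightarrow> 'a) \<Rightarrow> bool" where
  "metric_dynamical_system M \<omega> \<longleftrightarrow>
     prob_space M \<and>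
     (\<lambda>(t, \<theta>). \<omega> t \<theta>) \<in> measurable (borel \<Otimes>\<^sub>M M) M \<and>
     (\<forall>t. \<omega> t \<in> measurable M M \<and> distr M M (\<omega> t) = M) \<and>
     (\<forall>\<theta>\<in>space M. \<omega> 0 \<theta> = \<theta>) \<and>
     (\<forall>\<theta>\<in>space M. \<forall>s t. \<omega> (s + t) \<theta> = \<omega> t (\<omega> s \<theta>))"

text \<open>The norm  sup over [0,1] of |f| plus Lipschitz constant on [0,1]
  (valued in ennreal so that it may be infinite).\<close>
definition lip01_norm :: "(real \<Rightarrow> real) \<Rightarrow> ennreal" where
  "lip01_norm f =
     (SUP x\<in>{0..1}. ennreal \<bar>f x\<bar>) +
     (SUP x\<in>{0..1}. SUP y\<in>{0..1} - {x}. ennreal (\<bar>f y - f x\<bar> / \<bar>y - x\<bar>))"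

text \<open>Hitting time of 1 starting from the fractional part of x (inf of empty set = \<infinity>).\<close>
definition hit_time :: "(real \<Rightarrow> 'a \<Rightarrow> real \<Rightarrow> real) \<Rightarrow> 'a \<Rightarrow> real \<Rightarrow> ereal" where
  "hit_time \<phi> \<theta> x = Inf {ereal t | t. 0 \<le> t \<and> \<phi> t \<theta> (frac x) = 1}"

fun hitS :: "(real \<Rightarrow> 'a \<Rightarrow> real \<Rightarrow> real) \<Rightarrow> (real \<Rightarrow> 'a \<Rightarrow> 'a) \<Rightarrow> real \<Rightarrow> 'a \<Rightarrow> real \<Rightarrow> nat \<Rightarrow> ereal" where
  "hitS \<phi> \<omega> Vr \<theta> x 0 = 0"
| "hitS \<phi> \<omega> Vr \<theta> x (Suc 0) = hit_time \<phi> \<theta> x"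
| "hitS \<phi> \<omega> Vr \<theta> x (Suc (Suc n)) =
     hitS \<phi> \<omega> Vr \<theta> x (Suc n) +
     hit_time \<phi> (\<omega> (real_of_ereal (hitS \<phi> \<omega> Vr \<theta> x (Suc n))) \<theta>) Vr"

definition num_hits :: "(real \<Rightarrow> 'a \<Rightarrow> real \<Rightarrow> real) \<Rightarrow> (real \<Rightarrow> 'a \<Rightarrow> 'a) \<Rightarrow> real \<Rightarrow> real \<Rightarrow> 'a \<Rightarrow> real \<Rightarrow> nat" where
  "num_hits \<phi> \<omega> Vr t \<theta> x = (GREATEST n. hitS \<phi> \<omega> Vr \<theta> x n \<le> ereal t)"

definition Vhat :: "(real \<Rightarrow> 'a \<Rightarrow> real \<Rightarrow> real) \<Rightarrow> (real \<Rightarrow> 'a \<Rightarrow> 'a) \<Rightarrow> real \<Rightarrow> real \<Rightarrow> 'a \<Rightarrow> real \<Rightarrow> real" where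
  "Vhat \<phi> \<omega> Vr t \<theta> x =
     (let n = num_hits \<phi> \<omega> Vr t \<theta> x;
          Sn = real_of_ereal (hitS \<phi> \<omega> Vr \<theta> x n)
      in if n = 0 then of_int \<lfloor>x\<rfloor> + \<phi> t \<theta> (frac x)
         else of_int \<lfloor>x\<rfloor> + real n + \<phi> (t - Sn) (\<omega> Sn \<theta>) Vr)"

end

theory Submission
  imports Defs
begin

text \<open>Between two consecutive hits each lifted trajectory solves x' = F(\<theta>\<cdot>t, x), whose
  right-hand side is non-increasing in x, so the gap between two such solutions keeps its sign
  and never grows. At a hit a trajectory jumps from 1 back to V while its integer part increases
  by one. Hence, with H the difference of the integer parts and p1, p2 the positions in [0,1],
  the quantity H + (p1 - p2)/(1 - V) never increases (a jump leaves it unchanged), so it stays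
  below the least integer B \<ge> 0 bounding its initial value, and H stays below B whenever
  p1 < p2. This gives Vhat_t(x1) - Vhat_t(x2) = H + p1 - p2 \<le> B \<le> V/(1 - V) + 1. The argument
  is an induction on the total number of hits, which is finite on bounded time intervals since
  every complete lap costs 1 - V of the integral of the Lipschitz norm of F.\<close>

section \<open>Comparison of solutions of monotone scalar equations\<close>

lemma last_level_crossing:
  fixes f :: "real \<Rightarrow> real"
  assumes cont: "continuous_on {a..b} f" and "a \<le> b" "f a \<le> c" "c < f b"
  obtains a' where "a \<le> a'" "a' < b" "f a' = c" "\<And>s. a' < s \<Longrightarrow> s \<le> b \<Longrightarrow> c < f s"
proof -
  define T where "T = {a..b} \<inter> f -` {..c}"
  have "closed T" unfolding T_def
    by (rule continuous_closed_preimage[OF cont]) auto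
  moreover have "a \<in> T" "bdd_above T" using assms by (auto simp: T_def bdd_above_def)
  ultimately have "Sup T \<in> T" by (intro closed_contains_Sup) auto
  define a' where "a' = Sup T"
  have upper: "s \<le> a'" if "s \<in> T" for s
    unfolding a'_def using \<open>bdd_above T\<close> that by (simp add: cSup_upper)
  have a': "a \<le> a'" "a' \<le> b" "f a' \<le> c"
    using \<open>Sup T \<in> T\<close> \<open>a \<in> T\<close> upper by (auto simp: a'_def T_def)
  have "a' < b" using a' assms by (cases "a' = b") auto
  have above: "c < f s" if "a' < s" "s \<le> b" for s
    using upper[of s] that a' by (force simp: T_def)
  have "f a' = c"
  proof (rule ccontr)
    assume "f a' \<noteq> c"
    with a' have "f a' < c" by simp
    moreover have "continuous_on {a'..b} f" using a' by (auto intro: continuous_on_subset[OF cont])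
    ultimately obtain z where "a' \<le> z" "z \<le> b" "f z = c"
      using IVT'[of f a' c b] assms a' by force
    with above[of z] \<open>f a' < c\<close> show False by (cases "z = a'") auto
  qed
  with a' \<open>a' < b\<close> above show ?thesis by (intro that)
qed

definition integral_solution :: "(real \<Rightarrow> real \<Rightarrow> real) \<Rightarrow> (real \<Rightarrow> real) \<Rightarrow> real \<Rightarrow> real \<Rightarrow> bool" where
  "integral_solution f g a b \<longleftrightarrow> (\<lambda>s. f s (g s)) integrable_on {a..b} \<and>
     (\<forall>u\<in>{a..b}. g u = g a + integral {a..u} (\<lambda>s. f s (g s)))"

lemma integral_solutionD:
  assumes "integral_solution f g a b" "u \<in> {a..b}"
  shows "g u = g a + integral {a..u} (\<lambda>s. f s (g s))"
  using assms unfolding integral_solution_def by blast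

lemma integral_solution_integrable:
  "integral_solution f g a b \<Longrightarrow> (\<lambda>s. f s (g s)) integrable_on {a..b}"
  unfolding integral_solution_def by blast

lemma integral_solution_continuous:
  assumes "integral_solution f g a b"
  shows "continuous_on {a..b} g"
proof -
  have "continuous_on {a..b} (\<lambda>u. g a + integral {a..u} (\<lambda>s. f s (g s)))"
    using integral_solution_integrable[OF assms]
    by (intro continuous_intros indefinite_integral_continuous_1)
  then show ?thesis
    by (rule continuous_on_eq) (use integral_solutionD[OF assms] in metis)
qed

lemma integral_solution_subinterval:
  assumes sol: "integral_solution f g a b" and "a \<le> u" "u \<le> v" "v \<le> b"
  shows "integral_solution f g u v"
  unfolding integral_solution_def
proof
  have int: "(\<lambda>s. f s (g s)) integrable_on {a..b}"
    using integral_solution_integrable[OF sol] .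
  show "(\<lambda>s. f s (g s)) integrable_on {u..v}"
    by (rule integrable_subinterval_real[OF int]) (use assms in auto)
  show "\<forall>w\<in>{u..v}. g w = g u + integral {u..w} (\<lambda>s. f s (g s))"
  proof
    fix w assume w: "w \<in> {u..v}"
    have "(\<lambda>s. f s (g s)) integrable_on {a..w}"
      by (rule integrable_subinterval_real[OF int]) (use assms w in auto)
    then have "integral {a..u} (\<lambda>s. f s (g s)) + integral {u..w} (\<lambda>s. f s (g s)) =
        integral {a..w} (\<lambda>s. f s (g s))"
      by (rule Henstock_Kurzweil_Integration.integral_combine[rotated 2]) (use assms w in auto)
    moreover have "g w = g a + integral {a..w} (\<lambda>s. f s (g s))"
      "g u = g a + integral {a..u} (\<lambda>s. f s (g s))"
      using w assms by (auto intro!: integral_solutionD[OF sol])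
    ultimately show "g w = g u + integral {u..w} (\<lambda>s. f s (g s))" by linarith
  qed
qed

text \<open>For a non-increasing right-hand side, once the gap g - h exceeds the level c \<ge> 0 the
  drift of g is at most that of h, so the gap cannot climb over c.\<close>

lemma integral_solution_gap_le:
  assumes mono: "\<And>s y z. s \<in> {a..b} \<Longrightarrow> y \<le> z \<Longrightarrow> f s z \<le> f s y"
    and g: "integral_solution f g a b" and h: "integral_solution f h a b"
    and "a \<le> b" "0 \<le> c" "g a - h a \<le> c"
  shows "g b - h b \<le> c"
proof (rule ccontr)
  assume "\<not> g b - h b \<le> c"
  then have gap_b: "c < g b - h b" by simp
  have "continuous_on {a..b} (\<lambda>s. g s - h s)"
    using integral_solution_continuous[OF g] integral_solution_continuous[OF h]
    by (intro continuous_intros)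
  then obtain a' where a': "a \<le> a'" "a' < b" "g a' - h a' = c"
      and above: "\<And>s. a' < s \<Longrightarrow> s \<le> b \<Longrightarrow> c < g s - h s"
    using last_level_crossing[of a b "\<lambda>s. g s - h s" c] assms gap_b by blast
  have g': "integral_solution f g a' b" and h': "integral_solution f h a' b"
    using integral_solution_subinterval[OF g] integral_solution_subinterval[OF h] a' by auto
  have "integral {a'..b} (\<lambda>s. f s (g s)) \<le> integral {a'..b} (\<lambda>s. f s (h s))"
  proof (rule integral_le[OF integral_solution_integrable[OF g'] integral_solution_integrable[OF h']])
    fix s assume s: "s \<in> {a'..b}"
    then have "c \<le> g s - h s" using a' above[of s] by (cases "s = a'") auto
    then show "f s (g s) \<le> f s (h s)" using mono s a' \<open>0 \<le> c\<close> by auto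
  qed
  moreover have "g b = g a' + integral {a'..b} (\<lambda>s. f s (g s))"
    "h b = h a' + integral {a'..b} (\<lambda>s. f s (h s))"
    using a' by (auto intro!: integral_solutionD[OF g'] integral_solutionD[OF h'])
  ultimately show False using a' gap_b by linarith
qed

lemma integral_solutions_contract:
  assumes mono: "\<And>s y z. s \<in> {a..b} \<Longrightarrow> y \<le> z \<Longrightarrow> f s z \<le> f s y"
    and g: "integral_solution f g a b" and h: "integral_solution f h a b" and "a \<le> b"
  shows "0 \<le> g a - h a \<Longrightarrow> 0 \<le> g b - h b \<and> g b - h b \<le> g a - h a"
    and "g a - h a \<le> 0 \<Longrightarrow> g a - h a \<le> g b - h b \<and> g b - h b \<le> 0"
  using integral_solution_gap_le[OF mono g h \<open>a \<le> b\<close>, of "g a - h a"]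
    integral_solution_gap_le[OF mono g h \<open>a \<le> b\<close>, of 0]
    integral_solution_gap_le[OF mono h g \<open>a \<le> b\<close>, of "h a - g a"]
    integral_solution_gap_le[OF mono h g \<open>a \<le> b\<close>, of 0]
  by auto

section \<open>A Lyapunov function for pairs of lifted trajectories\<close>

definition potential_bound :: "real \<Rightarrow> int \<Rightarrow> int \<Rightarrow> real \<Rightarrow> real \<Rightarrow> bool" where
  "potential_bound V B H p1 p2 \<longleftrightarrow>
     real_of_int H + (p1 - p2) / (1 - V) \<le> real_of_int B \<and> (p1 < p2 \<longrightarrow> H \<le> B)"

lemma potential_bound_contract:
  assumes "V < 1" and bound: "potential_bound V B H p1 p2"
    and pos: "0 \<le> p1 - p2 \<Longrightarrow> 0 \<le> q1 - q2 \<and> q1 - q2 \<le> p1 - p2"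
    and neg: "p1 - p2 \<le> 0 \<Longrightarrow> p1 - p2 \<le> q1 - q2 \<and> q1 - q2 \<le> 0"
  shows "potential_bound V B H q1 q2"
proof (cases "0 \<le> p1 - p2")
  case True
  then have "(q1 - q2) / (1 - V) \<le> (p1 - p2) / (1 - V)"
    using pos \<open>V < 1\<close> by (intro divide_right_mono) auto
  then show ?thesis using bound True pos unfolding potential_bound_def by auto
next
  case False
  then have "(q1 - q2) / (1 - V) \<le> 0" using neg \<open>V < 1\<close> by (intro divide_nonpos_pos) auto
  then show ?thesis using bound False unfolding potential_bound_def by auto
qed

lemma potential_bound_reset_first:
  assumes "V < 1" "q2 < 1" and bound: "potential_bound V B H 1 q2"
  shows "potential_bound V B (H + 1) V q2"
proof -
  have "0 < (1 - q2) / (1 - V)" using assms by simp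
  with bound have "H < B" unfolding potential_bound_def by linarith
  moreover have "(1 - q2) / (1 - V) = 1 + (V - q2) / (1 - V)"
    using \<open>V < 1\<close> by (simp add: field_simps)
  ultimately show ?thesis using bound unfolding potential_bound_def by auto
qed

lemma potential_bound_reset_second:
  assumes "V < 1" "q1 \<le> 1" and bound: "potential_bound V B H q1 1"
  shows "potential_bound V B (H - 1) q1 V"
proof -
  have "(q1 - 1) / (1 - V) = -1 + (q1 - V) / (1 - V)"
    using \<open>V < 1\<close> by (simp add: field_simps)
  moreover have "q1 < V \<Longrightarrow> H \<le> B" using bound \<open>V < 1\<close> unfolding potential_bound_def by auto
  ultimately show ?thesis using bound unfolding potential_bound_def by auto
qed

definition lap_update :: "real \<Rightarrow> nat \<Rightarrow> nat \<Rightarrow> real \<Rightarrow> real \<Rightarrow> bool" where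
  "lap_update V m n q r \<longleftrightarrow> (n = m \<and> q < 1 \<and> r = q) \<or> (n = Suc m \<and> q = 1 \<and> r = V)"

text \<open>The order matters when both trajectories hit 1 at once: the second one is reset first.\<close>

lemma potential_bound_update:
  assumes "V < 1" and bound: "potential_bound V B H q1 q2"
    and up1: "lap_update V m1 n1 q1 r1" and up2: "lap_update V m2 n2 q2 r2"
  shows "potential_bound V B (H + int n1 - int m1 - int n2 + int m2) r1 r2"
proof -
  have "q1 \<le> 1" using up1 unfolding lap_update_def by auto
  from up2 consider "n2 = m2" "q2 < 1" "r2 = q2" | "n2 = Suc m2" "q2 = 1" "r2 = V"
    unfolding lap_update_def by blast
  then have second: "potential_bound V B (H - int n2 + int m2) q1 r2 \<and> r2 < 1"
    by cases (use bound potential_bound_reset_second[OF \<open>V < 1\<close> \<open>q1 \<le> 1\<close>] \<open>V < 1\<close> in auto)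
  from up1 consider "n1 = m1" "r1 = q1" | "n1 = Suc m1" "q1 = 1" "r1 = V"
    unfolding lap_update_def by blast
  then show ?thesis
  proof cases
    case 1
    then show ?thesis using second by (simp add: algebra_simps)
  next
    case 2
    then have "potential_bound V B (H - int n2 + int m2 + 1) V r2"
      using second by (intro potential_bound_reset_first[OF \<open>V < 1\<close>]) auto
    then show ?thesis using 2 by (simp add: algebra_simps)
  qed
qed

lemma potential_bound_initial:
  assumes "0 \<le> V" "V < 1" "x1 \<le> x2"
  obtains B where "real_of_int B \<le> V / (1 - V) + 1"
    "potential_bound V B (\<lfloor>x1\<rfloor> - \<lfloor>x2\<rfloor>) (frac x1) (frac x2)"
proof -
  define P where "P = real_of_int (\<lfloor>x1\<rfloor> - \<lfloor>x2\<rfloor>) + (frac x1 - frac x2) / (1 - V)"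
  define B where "B = max 0 \<lceil>P\<rceil>"
  have floor_le: "\<lfloor>x1\<rfloor> \<le> \<lfloor>x2\<rfloor>" using \<open>x1 \<le> x2\<close> by (rule floor_mono)
  have "P \<le> real_of_int B" unfolding B_def by linarith
  then have "potential_bound V B (\<lfloor>x1\<rfloor> - \<lfloor>x2\<rfloor>) (frac x1) (frac x2)"
    using floor_le unfolding potential_bound_def P_def by (auto simp: B_def)
  moreover have "real_of_int B \<le> V / (1 - V) + 1"
  proof (cases "P \<le> 0")
    case True
    then show ?thesis using assms by (simp add: B_def)
  next
    case False
    have "\<lfloor>x1\<rfloor> \<noteq> \<lfloor>x2\<rfloor>"
    proof
      assume same: "\<lfloor>x1\<rfloor> = \<lfloor>x2\<rfloor>"
      then have "frac x1 - frac x2 \<le> 0" using \<open>x1 \<le> x2\<close> by (simp add: frac_def)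
      then show False using False same assms by (simp add: P_def divide_nonpos_pos)
    qed
    with floor_le have "real_of_int (\<lfloor>x1\<rfloor> - \<lfloor>x2\<rfloor>) \<le> -1" by simp
    moreover have "frac x1 - frac x2 < 1" using frac_lt_1[of x1] frac_ge_0[of x2] by linarith
    then have "(frac x1 - frac x2) / (1 - V) < 1 / (1 - V)"
      using assms by (intro divide_strict_right_mono) auto
    moreover have "1 / (1 - V) = V / (1 - V) + 1" using assms by (simp add: field_simps)
    ultimately have "P < V / (1 - V)" by (simp add: P_def)
    then show ?thesis using False ceiling_correct[of P] by (simp add: B_def)
  qed
  ultimately show ?thesis by (rule that[rotated])
qed

lemma potential_bound_le:
  assumes "0 \<le> V" "V < 1" "potential_bound V B H p1 p2"
  shows "real_of_int H + (p1 - p2) \<le> real_of_int B"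
proof (cases "p1 < p2")
  case False
  then have "p1 - p2 \<le> (p1 - p2) / (1 - V)"
    using assms by (simp add: le_divide_eq mult_left_le)
  then show ?thesis using assms unfolding potential_bound_def by linarith
qed (use assms in \<open>auto simp: potential_bound_def\<close>)

section \<open>Laps of the lifted semiflow\<close>

lemma hit_time_nonneg: "0 \<le> hit_time \<phi> \<theta> x"
  unfolding hit_time_def by (auto intro!: Inf_greatest)

lemma hit_time_frac: "hit_time \<phi> \<theta> (frac x) = hit_time \<phi> \<theta> x"
  by (simp add: hit_time_def frac_def)

locale lifted_semiflow =
  fixes M :: "'a measure" and \<omega> :: "real \<Rightarrow> 'a \<Rightarrow> 'a"
    and F :: "'a \<Rightarrow> real \<Rightarrow> real" and \<phi> :: "real \<Rightarrow> 'a \<Rightarrow> real \<Rightarrow> real"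
    and V :: real
  assumes mds: "metric_dynamical_system M \<omega>"
    and V_nonneg: "0 \<le> V" and V_less_1: "V < 1"
    and F_meas: "(\<lambda>(\<theta>, x). F \<theta> x) \<in> borel_measurable (M \<Otimes>\<^sub>M borel)"
    and F_int: "\<And>\<theta>. \<theta> \<in> space M \<Longrightarrow>
                  (\<integral>\<^sup>+ t\<in>{0..1}. lip01_norm (F (\<omega> t \<theta>)) \<partial>lborel) < \<infinity>"
    and sol_int: "\<And>\<theta> x t. \<theta> \<in> space M \<Longrightarrow> 0 \<le> t \<Longrightarrow>
                  (\<lambda>s. F (\<omega> s \<theta>) (\<phi> s \<theta> x)) absolutely_integrable_on {0..t}"
    and sol_eq: "\<And>\<theta> x t. \<theta> \<in> space M \<Longrightarrow> 0 \<le> t \<Longrightarrow>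
                  \<phi> t \<theta> x = x + integral {0..t} (\<lambda>s. F (\<omega> s \<theta>) (\<phi> s \<theta> x))"
    and F_mono: "\<And>\<theta> x y. \<theta> \<in> space M \<Longrightarrow> x \<le> y \<Longrightarrow> F \<theta> y \<le> F \<theta> x"
begin

lemma flow_in_space: "\<theta> \<in> space M \<Longrightarrow> \<omega> t \<theta> \<in> space M"
  using mds unfolding metric_dynamical_system_def by (meson measurable_space)

lemma flow_add: "\<theta> \<in> space M \<Longrightarrow> \<omega> (s + t) \<theta> = \<omega> t (\<omega> s \<theta>)"
  using mds unfolding metric_dynamical_system_def by blast

lemma flow_zero: "\<theta> \<in> space M \<Longrightarrow> \<omega> 0 \<theta> = \<theta>"
  using mds unfolding metric_dynamical_system_def by blast

lemma solution_zero: "\<theta> \<in> space M \<Longrightarrow> \<phi> 0 \<theta> y = y"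
  using sol_eq[of \<theta> 0 y] by simp

abbreviation drift :: "'a \<Rightarrow> real \<Rightarrow> real \<Rightarrow> real" where
  "drift \<theta> \<equiv> \<lambda>s. F (\<omega> s \<theta>)"

lemma drift_antimono: "\<theta> \<in> space M \<Longrightarrow> y \<le> z \<Longrightarrow> drift \<theta> s z \<le> drift \<theta> s y"
  by (intro F_mono flow_in_space)

text \<open>The solution started at time S from y in the fibre of \<omega> S \<theta> solves, by the cocycle
  property, the equation driven by \<theta> on [S, b].\<close>

lemma restarted_solution:
  assumes \<theta>: "\<theta> \<in> space M" and "0 \<le> S" "S \<le> b"
  shows "integral_solution (drift \<theta>) (\<lambda>s. \<phi> (s - S) (\<omega> S \<theta>) y) S b"
    and "(\<lambda>s. \<bar>drift \<theta> s (\<phi> (s - S) (\<omega> S \<theta>) y)\<bar>) integrable_on {S..b}"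
proof -
  define \<theta>' where "\<theta>' = \<omega> S \<theta>"
  have \<theta>': "\<theta>' \<in> space M" unfolding \<theta>'_def by (rule flow_in_space[OF \<theta>])
  define \<psi> where "\<psi> = (\<lambda>r. F (\<omega> r \<theta>') (\<phi> r \<theta>' y))"
  define f where "f = (\<lambda>s. drift \<theta> s (\<phi> (s - S) \<theta>' y))"
  have shift: "(\<lambda>r. f (r + S)) = \<psi>"
    using flow_add[OF \<theta>, of S] by (simp add: fun_eq_iff f_def \<psi>_def \<theta>'_def add.commute)
  have "\<psi> integrable_on {S-S..b-S}" "(\<lambda>r. norm (\<psi> r)) integrable_on {S-S..b-S}"
    using sol_int[OF \<theta>', of "b - S" y] assms
    by (auto simp: \<psi>_def absolutely_integrable_on_def)
  then have int: "f integrable_on {S..b}" "(\<lambda>s. \<bar>f s\<bar>) integrable_on {S..b}"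
    using integrable_shift_real_ivl_iff[of f S S b]
      integrable_shift_real_ivl_iff[of "\<lambda>s. \<bar>f s\<bar>" S S b]
    by (auto simp: shift fun_cong[OF shift])
  then show "(\<lambda>s. \<bar>drift \<theta> s (\<phi> (s - S) (\<omega> S \<theta>) y)\<bar>) integrable_on {S..b}"
    by (simp add: f_def \<theta>'_def)
  show "integral_solution (drift \<theta>) (\<lambda>s. \<phi> (s - S) (\<omega> S \<theta>) y) S b"
    unfolding integral_solution_def
  proof (intro conjI ballI)
    show "(\<lambda>s. drift \<theta> s (\<phi> (s - S) (\<omega> S \<theta>) y)) integrable_on {S..b}"
      using int(1) by (simp add: f_def \<theta>'_def)
    fix u assume u: "u \<in> {S..b}"
    have "integral {S..u} f = integral {0..u-S} \<psi>"
      using integral_shift_real_ivl[of S S u f] shift by simp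
    moreover have "\<phi> (u - S) \<theta>' y = y + integral {0..u-S} \<psi>"
      unfolding \<psi>_def using u by (intro sol_eq \<theta>') auto
    ultimately show "\<phi> (u - S) (\<omega> S \<theta>) y =
        \<phi> (S - S) (\<omega> S \<theta>) y + integral {S..u} (\<lambda>s. drift \<theta> s (\<phi> (s - S) (\<omega> S \<theta>) y))"
      using solution_zero[OF \<theta>'] by (simp add: f_def \<theta>'_def)
  qed
qed

lemma solution_continuous:
  "\<theta> \<in> space M \<Longrightarrow> 0 \<le> b \<Longrightarrow> continuous_on {0..b} (\<lambda>s. \<phi> s \<theta> y)"
  using integral_solution_continuous restarted_solution(1)[of \<theta> 0 b y] by (simp add: flow_zero)

lemma solution_reaches_one:
  assumes "\<theta> \<in> space M" "y < 1" "0 \<le> s" "1 \<le> \<phi> s \<theta> y"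
  obtains w where "0 \<le> w" "w \<le> s" "\<phi> w \<theta> y = 1"
  using IVT'[of "\<lambda>t. \<phi> t \<theta> y" 0 1 s] assms solution_continuous[of \<theta> s y] solution_zero[of \<theta> y]
  by (auto intro: that)

lemma hit_time_infinite:
  assumes "\<theta> \<in> space M" "hit_time \<phi> \<theta> y = \<infinity>" "0 \<le> s"
  shows "\<phi> s \<theta> (frac y) < 1"
proof (rule ccontr)
  assume "\<not> \<phi> s \<theta> (frac y) < 1"
  then obtain w where "0 \<le> w" "\<phi> w \<theta> (frac y) = 1"
    using solution_reaches_one[of \<theta> "frac y" s] assms frac_lt_1 by force
  then have "hit_time \<phi> \<theta> y \<le> ereal w" unfolding hit_time_def by (intro Inf_lower) auto
  with assms show False by simp
qed

lemma hit_time_finite: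
  assumes \<theta>: "\<theta> \<in> space M" and "hit_time \<phi> \<theta> y \<noteq> \<infinity>"
  obtains \<tau> where "0 < \<tau>" "hit_time \<phi> \<theta> y = ereal \<tau>" "\<phi> \<tau> \<theta> (frac y) = 1"
    "\<And>s. 0 \<le> s \<Longrightarrow> s < \<tau> \<Longrightarrow> \<phi> s \<theta> (frac y) < 1"
proof -
  define z where "z = frac y"
  define Z where "Z = {t. 0 \<le> t \<and> \<phi> t \<theta> z = 1}"
  have hit_time: "hit_time \<phi> \<theta> y = Inf (ereal ` Z)"
    unfolding hit_time_def Z_def z_def by (rule arg_cong[where f=Inf]) auto
  then have "Z \<noteq> {}" using assms by (auto simp: top_ereal_def)
  then obtain w where w: "w \<in> Z" by blast
  then have "0 \<le> w" by (simp add: Z_def)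
  define Zw where "Zw = {0..w} \<inter> (\<lambda>t. \<phi> t \<theta> z) -` {1}"
  have "closed Zw" unfolding Zw_def
    by (rule continuous_closed_preimage[OF solution_continuous[OF \<theta> \<open>0 \<le> w\<close>]]) auto
  moreover have "w \<in> Zw" "bdd_below Zw" using w by (auto simp: Zw_def Z_def bdd_below_def)
  ultimately have "Inf Zw \<in> Zw" by (intro closed_contains_Inf) auto
  define \<tau> where "\<tau> = Inf Zw"
  have \<tau>: "\<tau> \<in> Z" using \<open>Inf Zw \<in> Zw\<close> by (auto simp: \<tau>_def Zw_def Z_def)
  have least: "\<tau> \<le> v" if "v \<in> Z" for v
  proof (cases "v \<le> w")
    case True
    then have "v \<in> Zw" using that by (auto simp: Zw_def Z_def)
    then show ?thesis unfolding \<tau>_def using \<open>bdd_below Zw\<close> by (simp add: cInf_lower)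
  next
    case False
    then show ?thesis using \<open>Inf Zw \<in> Zw\<close> by (auto simp: \<tau>_def Zw_def)
  qed
  have "Inf (ereal ` Z) = ereal \<tau>" using \<tau> least by (intro cInf_eq_minimum) auto
  moreover have "0 < \<tau>"
    using \<tau> solution_zero[OF \<theta>, of z] frac_lt_1[of y] by (cases "\<tau> = 0") (auto simp: Z_def z_def)
  moreover have "\<phi> s \<theta> z < 1" if "0 \<le> s" "s < \<tau>" for s
  proof (rule ccontr)
    assume "\<not> \<phi> s \<theta> z < 1"
    then obtain v where "v \<in> Z" "v \<le> s"
      using solution_reaches_one[OF \<theta> _ \<open>0 \<le> s\<close>] frac_lt_1[of y] by (force simp: Z_def z_def)
    then show False using least that by force
  qed
  ultimately show ?thesis using \<tau> hit_time that by (auto simp: Z_def z_def)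
qed

abbreviation hit_sum :: "'a \<Rightarrow> real \<Rightarrow> nat \<Rightarrow> ereal" where
  "hit_sum \<theta> x n \<equiv> hitS \<phi> \<omega> V \<theta> x n"

abbreviation hits :: "'a \<Rightarrow> real \<Rightarrow> real \<Rightarrow> nat" where
  "hits \<theta> x t \<equiv> num_hits \<phi> \<omega> V t \<theta> x"

definition lap_start :: "'a \<Rightarrow> real \<Rightarrow> nat \<Rightarrow> real" where
  "lap_start \<theta> x n = real_of_ereal (hit_sum \<theta> x n)"

definition lap_init :: "real \<Rightarrow> nat \<Rightarrow> real" where
  "lap_init x n = (if n = 0 then frac x else V)"

text \<open>The position \<phi>_(t - S_n)(\<theta>\<cdot>S_n, V_r) in [0,1] during the n-th lap, i.e. between the
  n-th and the (n+1)-st hit; for n = 0 it starts from the fractional part of x instead.\<close>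

definition lap :: "'a \<Rightarrow> real \<Rightarrow> nat \<Rightarrow> real \<Rightarrow> real" where
  "lap \<theta> x n s = \<phi> (s - lap_start \<theta> x n) (\<omega> (lap_start \<theta> x n) \<theta>) (lap_init x n)"

lemma frac_lap_init: "frac (lap_init x n) = lap_init x n"
  using V_nonneg V_less_1 frac_lt_1[of x] by (simp add: lap_init_def frac_eq)

lemma hit_sum_Suc:
  "\<theta> \<in> space M \<Longrightarrow>
    hit_sum \<theta> x (Suc n) = hit_sum \<theta> x n + hit_time \<phi> (\<omega> (lap_start \<theta> x n) \<theta>) (lap_init x n)"
  by (cases n) (simp_all add: lap_start_def lap_init_def flow_zero hit_time_frac)

lemma hit_sum_le_Suc: "\<theta> \<in> space M \<Longrightarrow> hit_sum \<theta> x n \<le> hit_sum \<theta> x (Suc n)"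
  unfolding hit_sum_Suc by (intro ereal_le_add_self hit_time_nonneg)

lemma hit_sum_mono: "\<theta> \<in> space M \<Longrightarrow> m \<le> n \<Longrightarrow> hit_sum \<theta> x m \<le> hit_sum \<theta> x n"
  using incseq_SucI[of "hit_sum \<theta> x", OF hit_sum_le_Suc] unfolding incseq_def by blast

lemma hit_sum_nonneg: "\<theta> \<in> space M \<Longrightarrow> 0 \<le> hit_sum \<theta> x n"
  using hit_sum_mono[of \<theta> 0 n x] by simp

lemma hit_sum_finite:
  assumes "\<theta> \<in> space M" "hit_sum \<theta> x n \<le> ereal t"
  shows "hit_sum \<theta> x n = ereal (lap_start \<theta> x n)" "lap_start \<theta> x n \<le> t"
  using assms hit_sum_nonneg[of \<theta> x n] by (cases "hit_sum \<theta> x n"; simp add: lap_start_def)+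

context
  fixes \<theta> x n a
  assumes \<theta>: "\<theta> \<in> space M" and start: "hit_sum \<theta> x n = ereal a"
begin

lemma lap_start_eq: "lap_start \<theta> x n = a"
  using start by (simp add: lap_start_def)

lemma lap_start_nonneg: "0 \<le> a"
  using hit_sum_nonneg[OF \<theta>, of x n] start by simp

lemma lap_eq_restarted: "lap \<theta> x n = (\<lambda>s. \<phi> (s - a) (\<omega> a \<theta>) (frac (lap_init x n)))"
  by (simp add: fun_eq_iff lap_def lap_start_eq frac_lap_init)

lemma hit_sum_Suc_eq: "hit_sum \<theta> x (Suc n) = ereal a + hit_time \<phi> (\<omega> a \<theta>) (lap_init x n)"
  using hit_sum_Suc[OF \<theta>, of x n] start by (simp add: lap_start_eq)

lemma lap_solution: "a \<le> b \<Longrightarrow> integral_solution (drift \<theta>) (lap \<theta> x n) a b"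
  using restarted_solution(1)[OF \<theta> lap_start_nonneg] by (simp add: lap_eq_restarted)

lemma lap_abs_integrable:
  "a \<le> b \<Longrightarrow> (\<lambda>s. \<bar>drift \<theta> s (lap \<theta> x n s)\<bar>) integrable_on {a..b}"
  using restarted_solution(2)[OF \<theta> lap_start_nonneg] by (simp add: lap_eq_restarted)

lemma lap_at_start: "lap \<theta> x n a = lap_init x n"
  using solution_zero[OF flow_in_space[OF \<theta>]] by (simp add: lap_eq_restarted frac_lap_init)

lemma lap_below_one_forever:
  assumes "hit_sum \<theta> x (Suc n) = \<infinity>" "a \<le> s"
  shows "lap \<theta> x n s < 1"
proof -
  have "hit_time \<phi> (\<omega> a \<theta>) (lap_init x n) = \<infinity>"
    using assms(1) hit_sum_Suc_eq by (cases "hit_time \<phi> (\<omega> a \<theta>) (lap_init x n)") auto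
  then show ?thesis
    using hit_time_infinite[OF flow_in_space[OF \<theta>]] assms(2) by (simp add: lap_eq_restarted)
qed

lemma lap_end:
  assumes "hit_sum \<theta> x (Suc n) \<noteq> \<infinity>"
  obtains b where "hit_sum \<theta> x (Suc n) = ereal b" "a < b" "lap \<theta> x n b = 1"
    "\<And>s. a \<le> s \<Longrightarrow> s < b \<Longrightarrow> lap \<theta> x n s < 1"
proof -
  have "hit_time \<phi> (\<omega> a \<theta>) (lap_init x n) \<noteq> \<infinity>" using assms hit_sum_Suc_eq by auto
  then obtain \<tau> where "0 < \<tau>" "hit_time \<phi> (\<omega> a \<theta>) (lap_init x n) = ereal \<tau>"
      "\<phi> \<tau> (\<omega> a \<theta>) (frac (lap_init x n)) = 1"
      "\<And>s. 0 \<le> s \<Longrightarrow> s < \<tau> \<Longrightarrow> \<phi> s (\<omega> a \<theta>) (frac (lap_init x n)) < 1"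
    using hit_time_finite[OF flow_in_space[OF \<theta>]] by blast
  then show ?thesis
    by (intro that[of "a + \<tau>"]) (auto simp: hit_sum_Suc_eq lap_eq_restarted)
qed

end

lemma lap_start_less_Suc:
  assumes "\<theta> \<in> space M" "hit_sum \<theta> x (Suc n) = ereal b"
  shows "hit_sum \<theta> x n = ereal (lap_start \<theta> x n)" "lap_start \<theta> x n < b"
proof -
  show start: "hit_sum \<theta> x n = ereal (lap_start \<theta> x n)"
    using hit_sum_finite[OF assms(1)] hit_sum_le_Suc[OF assms(1), of x n] assms(2) by simp
  obtain b' where "hit_sum \<theta> x (Suc n) = ereal b'" "lap_start \<theta> x n < b'"
    using lap_end[OF assms(1) start] assms(2) by auto
  then show "lap_start \<theta> x n < b" using assms(2) by simp
qed

lemma lap_start_pos: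
  assumes "\<theta> \<in> space M" "n \<noteq> 0" "hit_sum \<theta> x n = ereal (lap_start \<theta> x n)"
  shows "0 < lap_start \<theta> x n"
proof -
  obtain m where "n = Suc m" using assms(2) by (cases n) auto
  then show ?thesis
    using lap_start_less_Suc[OF assms(1), of x m] lap_start_nonneg[OF assms(1)] assms(3) by force
qed

end

section \<open>Finitely many hits in bounded time\<close>

lemma lip01_norm_ge_abs:
  assumes "y \<in> {0..1}"
  shows "ennreal \<bar>f y\<bar> \<le> lip01_norm f"
proof -
  have "ennreal \<bar>f y\<bar> \<le> (SUP x\<in>{0..1}. ennreal \<bar>f x\<bar>)" using assms by (rule SUP_upper)
  also have "\<dots> \<le> lip01_norm f" unfolding lip01_norm_def by simp
  finally show ?thesis .
qed

lemma nn_integral_disjoint_sum_le: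
  fixes f :: "'i \<Rightarrow> 'a \<Rightarrow> ennreal"
  assumes "finite K" and disj: "disjoint_family_on I K"
    and meas: "\<And>k. k \<in> K \<Longrightarrow> (\<lambda>r. f k r * indicator (I k) r) \<in> borel_measurable M"
    and le: "\<And>k r. k \<in> K \<Longrightarrow> r \<in> I k \<Longrightarrow> f k r \<le> g r"
  shows "(\<Sum>k\<in>K. \<integral>\<^sup>+ r. f k r * indicator (I k) r \<partial>M) \<le> (\<integral>\<^sup>+ r. g r \<partial>M)"
proof -
  have "(\<Sum>k\<in>K. f k r * indicator (I k) r) \<le> g r" for r
  proof (cases "\<exists>k\<in>K. r \<in> I k")
    case True
    then obtain k where k: "k \<in> K" "r \<in> I k" by blast
    then have "l \<in> K - {k} \<Longrightarrow> r \<notin> I l" for l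
      using disj unfolding disjoint_family_on_def by blast
    then have "(\<Sum>l\<in>K - {k}. f l r * indicator (I l) r) = 0" by (intro sum.neutral) auto
    then have "(\<Sum>k\<in>K. f k r * indicator (I k) r) = f k r"
      using k \<open>finite K\<close> by (simp add: sum.remove)
    then show ?thesis using le k by simp
  qed auto
  then have "(\<integral>\<^sup>+ r. (\<Sum>k\<in>K. f k r * indicator (I k) r) \<partial>M) \<le> (\<integral>\<^sup>+ r. g r \<partial>M)"
    by (intro nn_integral_mono)
  moreover have "(\<integral>\<^sup>+ r. (\<Sum>k\<in>K. f k r * indicator (I k) r) \<partial>M) =
      (\<Sum>k\<in>K. \<integral>\<^sup>+ r. f k r * indicator (I k) r \<partial>M)"
    by (rule nn_integral_sum) (rule meas)
  ultimately show ?thesis by simp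
qed

context lifted_semiflow
begin

lemma drift_along_continuous_measurable:
  assumes \<theta>: "\<theta> \<in> space M" and h: "continuous_on UNIV h"
  shows "(\<lambda>r. F (\<omega> r \<theta>) (h r)) \<in> borel_measurable borel"
proof -
  have flow: "(\<lambda>(t, \<theta>). \<omega> t \<theta>) \<in> borel \<Otimes>\<^sub>M M \<rightarrow>\<^sub>M M"
    using mds unfolding metric_dynamical_system_def by blast
  have "(\<lambda>r. (r, \<theta>)) \<in> borel \<rightarrow>\<^sub>M borel \<Otimes>\<^sub>M M"
    using \<theta> by (intro measurable_Pair measurable_ident_sets measurable_const) auto
  from measurable_comp[OF this flow] have "(\<lambda>r. \<omega> r \<theta>) \<in> borel \<rightarrow>\<^sub>M M"
    by (simp add: o_def)
  then have "(\<lambda>r. (\<omega> r \<theta>, h r)) \<in> borel \<rightarrow>\<^sub>M M \<Otimes>\<^sub>M borel"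
    using borel_measurable_continuous_onI[OF h] by (rule measurable_Pair)
  from measurable_comp[OF this F_meas] show ?thesis by (simp add: o_def)
qed

text \<open>A lap k \<ge> 1 starts at V; after its last visit to V it stays in (V, 1] and climbs
  by 1 - V, which the drift has to pay for.\<close>

lemma lap_last_rise:
  assumes \<theta>: "\<theta> \<in> space M" and "1 \<le> k" and a: "hit_sum \<theta> x k = ereal a"
    and b: "hit_sum \<theta> x (Suc k) = ereal b"
  obtains \<alpha> J where "a \<le> \<alpha>" "\<alpha> < b" "\<And>s. \<alpha> < s \<Longrightarrow> s \<le> b \<Longrightarrow> lap \<theta> x k s \<in> {0..1}"
    "((\<lambda>s. \<bar>drift \<theta> s (lap \<theta> x k s)\<bar>) has_integral J) {\<alpha>..b}" "1 - V \<le> J"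
proof -
  let ?g = "lap \<theta> x k"
  have "hit_sum \<theta> x (Suc k) \<noteq> \<infinity>" using b by simp
  then obtain b' where "hit_sum \<theta> x (Suc k) = ereal b'" "a < b'" "?g b' = 1"
      "\<And>s. a \<le> s \<Longrightarrow> s < b' \<Longrightarrow> ?g s < 1"
    using lap_end[OF \<theta> a] by blast
  with b have ab: "a < b" "?g b = 1" and below: "\<And>s. a \<le> s \<Longrightarrow> s < b \<Longrightarrow> ?g s < 1" by auto
  have sol: "integral_solution (drift \<theta>) ?g a b" using lap_solution[OF \<theta> a] ab by simp
  have "?g a = V" using lap_at_start[OF \<theta> a] \<open>1 \<le> k\<close> by (simp add: lap_init_def)
  then obtain \<alpha> where \<alpha>: "a \<le> \<alpha>" "\<alpha> < b" "?g \<alpha> = V" and above: "\<And>s. \<alpha> < s \<Longrightarrow> s \<le> b \<Longrightarrow> V < ?g s"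
    using last_level_crossing[OF integral_solution_continuous[OF sol], of V] ab V_less_1 by auto
  have in01: "?g s \<in> {0..1}" if "\<alpha> < s" "s \<le> b" for s
  proof -
    have "?g s \<le> 1" using below[of s] ab \<alpha> that by (cases "s = b") auto
    then show ?thesis using above[OF that] V_nonneg by simp
  qed
  have "(\<lambda>s. \<bar>drift \<theta> s (?g s)\<bar>) integrable_on {a..b}"
    using lap_abs_integrable[OF \<theta> a] ab by simp
  then have abs_int: "(\<lambda>s. \<bar>drift \<theta> s (?g s)\<bar>) integrable_on {\<alpha>..b}"
    by (rule integrable_subinterval_real) (use \<alpha> in auto)
  have sol': "integral_solution (drift \<theta>) ?g \<alpha> b"
    using integral_solution_subinterval[OF sol, of \<alpha> b] \<alpha> by auto
  have "?g b = ?g \<alpha> + integral {\<alpha>..b} (\<lambda>s. drift \<theta> s (?g s))"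
    using \<alpha> by (intro integral_solutionD[OF sol']) auto
  then have "1 - V = integral {\<alpha>..b} (\<lambda>s. drift \<theta> s (?g s))" using \<alpha> ab by linarith
  also have "\<dots> \<le> integral {\<alpha>..b} (\<lambda>s. \<bar>drift \<theta> s (?g s)\<bar>)"
    by (rule integral_le[OF integral_solution_integrable[OF sol'] abs_int]) simp
  finally show ?thesis
    using that[OF \<alpha>(1,2) in01 integrable_integral[OF abs_int]] by blast
qed

definition shifted_lap_drift :: "'a \<Rightarrow> real \<Rightarrow> real \<Rightarrow> nat \<Rightarrow> real \<Rightarrow> ennreal" where
  "shifted_lap_drift \<theta> x c k r = ennreal \<bar>F (\<omega> r (\<omega> c \<theta>)) (lap \<theta> x k (r + c))\<bar>"

lemma shifted_lap_drift_indicator_measurable: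
  assumes \<theta>: "\<theta> \<in> space M" and a: "hit_sum \<theta> x k = ereal a" and "a \<le> \<alpha>" "\<alpha> \<le> b"
  shows "(\<lambda>r. shifted_lap_drift \<theta> x c k r * indicator {\<alpha> - c<..b - c} r) \<in> borel_measurable lborel"
proof -
  define q where "q r = max \<alpha> (min b (r + c))" for r
  have "continuous_on {\<alpha>..b} (lap \<theta> x k)"
    using integral_solution_continuous[OF lap_solution[OF \<theta> a, of b]] assms
    by (auto elim: continuous_on_subset)
  then have "continuous_on UNIV (\<lambda>r. lap \<theta> x k (q r))"
    by (rule continuous_on_compose2) (use assms in \<open>auto simp: q_def intro!: continuous_intros\<close>)
  then have meas: "(\<lambda>r. F (\<omega> r (\<omega> c \<theta>)) (lap \<theta> x k (q r))) \<in> borel_measurable borel"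
    by (rule drift_along_continuous_measurable[OF flow_in_space[OF \<theta>]])
  have eq: "(\<lambda>r. shifted_lap_drift \<theta> x c k r * indicator {\<alpha> - c<..b - c} r) =
      (\<lambda>r. ennreal \<bar>F (\<omega> r (\<omega> c \<theta>)) (lap \<theta> x k (q r))\<bar> * indicator {\<alpha> - c<..b - c} r)"
    by (auto simp: fun_eq_iff shifted_lap_drift_def q_def indicator_def)
  show ?thesis unfolding eq using meas by measurable
qed

lemma lap_drift_nn_integral_ge:
  assumes \<theta>: "\<theta> \<in> space M" and "1 \<le> k" and a: "hit_sum \<theta> x k = ereal a"
    and b: "hit_sum \<theta> x (Suc k) = ereal b" and c: "0 \<le> c" "c \<le> a" "b \<le> c + 1"
  obtains \<alpha> where "a \<le> \<alpha>"
    "ennreal (1 - V) \<le> (\<integral>\<^sup>+ r. shifted_lap_drift \<theta> x c k r * indicator {\<alpha> - c<..b - c} r \<partial>lborel)"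
    "\<And>r. r \<in> {\<alpha> - c<..b - c} \<Longrightarrow>
       shifted_lap_drift \<theta> x c k r \<le> lip01_norm (F (\<omega> r (\<omega> c \<theta>))) * indicator {0..1} r"
    "(\<lambda>r. shifted_lap_drift \<theta> x c k r * indicator {\<alpha> - c<..b - c} r) \<in> borel_measurable lborel"
proof -
  obtain \<alpha> J where \<alpha>: "a \<le> \<alpha>" "\<alpha> < b" and in01: "\<And>s. \<alpha> < s \<Longrightarrow> s \<le> b \<Longrightarrow> lap \<theta> x k s \<in> {0..1}"
      and J: "((\<lambda>s. \<bar>drift \<theta> s (lap \<theta> x k s)\<bar>) has_integral J) {\<alpha>..b}" "1 - V \<le> J"
    using lap_last_rise[OF \<theta> \<open>1 \<le> k\<close> a b] by blast
  define f where "f = (\<lambda>r. \<bar>F (\<omega> r (\<omega> c \<theta>)) (lap \<theta> x k (r + c))\<bar>)"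
  have "(\<lambda>r. \<bar>drift \<theta> (r + c) (lap \<theta> x k (r + c))\<bar>) = f"
    using flow_add[OF \<theta>, of c] by (simp add: fun_eq_iff f_def add.commute)
  then have "(f has_integral J) {\<alpha> - c..b - c}"
    using has_integral_shift_real_ivl[OF J(1), of c] by simp
  then have "(\<integral>\<^sup>+ r. ennreal (f r) * indicator {\<alpha> - c..b - c} r \<partial>lborel) = ennreal J"
    by (rule nn_integral_has_integral_lebesgue'[rotated]) (simp add: f_def)
  moreover have "AE r in lborel. ennreal (f r) * indicator {\<alpha> - c<..b - c} r =
      ennreal (f r) * indicator {\<alpha> - c..b - c} r"
    using AE_lborel_singleton[of "\<alpha> - c"] by eventually_elim (auto simp: indicator_def)
  ultimately have "(\<integral>\<^sup>+ r. shifted_lap_drift \<theta> x c k r * indicator {\<alpha> - c<..b - c} r \<partial>lborel) = ennreal J"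
    by (simp add: nn_integral_cong_AE shifted_lap_drift_def f_def)
  moreover have "ennreal (1 - V) \<le> ennreal J" using J(2) by (rule ennreal_leI)
  moreover have "shifted_lap_drift \<theta> x c k r \<le> lip01_norm (F (\<omega> r (\<omega> c \<theta>))) * indicator {0..1} r"
    if "r \<in> {\<alpha> - c<..b - c}" for r
    using in01[of "r + c"] that \<alpha> c by (auto simp: shifted_lap_drift_def intro: lip01_norm_ge_abs)
  ultimately show ?thesis
    using that[OF \<alpha>(1)] shifted_lap_drift_indicator_measurable[OF \<theta> a \<alpha>(1) less_imp_le[OF \<alpha>(2)]]
    by simp
qed

text \<open>Complete laps after the first one that fit into a time window of length 1 are
  disjoint, and each of them contributes 1 - V to the integral of the Lipschitz norm of F
  over the window.\<close>

lemma laps_in_unit_window: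
  assumes \<theta>: "\<theta> \<in> space M" and "1 \<le> k0" "0 \<le> c" "c \<le> lap_start \<theta> x k0"
    and last: "hit_sum \<theta> x (k0 + N) = ereal b" "b \<le> c + 1"
  shows "ennreal (real N * (1 - V)) \<le> (\<integral>\<^sup>+ r. lip01_norm (F (\<omega> r (\<omega> c \<theta>))) * indicator {0..1} r \<partial>lborel)"
proof -
  define s where "s = lap_start \<theta> x"
  have hs: "hit_sum \<theta> x k = ereal (s k)" "s k \<le> b" if "k \<le> k0 + N" for k
    using hit_sum_finite[OF \<theta>, of x k b] hit_sum_mono[OF \<theta> that, of x] last by (simp_all add: s_def)
  have s_mono: "s k \<le> s l" if "k \<le> l" "l \<le> k0 + N" for k l
    using hit_sum_mono[OF \<theta> that(1), of x] hs that by simp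
  let ?K = "{k0..<k0 + N}"
  let ?g = "\<lambda>r. lip01_norm (F (\<omega> r (\<omega> c \<theta>))) * indicator {0..1} r"
  let ?f = "shifted_lap_drift \<theta> x c"
  define lap_part where "lap_part k \<alpha> \<longleftrightarrow> s k \<le> \<alpha> \<and>
      ennreal (1 - V) \<le> (\<integral>\<^sup>+ r. ?f k r * indicator {\<alpha> - c<..s (Suc k) - c} r \<partial>lborel) \<and>
      (\<forall>r \<in> {\<alpha> - c<..s (Suc k) - c}. ?f k r \<le> ?g r) \<and>
      (\<lambda>r. ?f k r * indicator {\<alpha> - c<..s (Suc k) - c} r) \<in> borel_measurable lborel" for k \<alpha>
  have "\<exists>\<alpha>. lap_part k \<alpha>" if k: "k \<in> ?K" for k
  proof -
    have bounds: "k \<le> k0 + N" "Suc k \<le> k0 + N" "1 \<le> k" "c \<le> s k" "s (Suc k) \<le> c + 1"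
      using k \<open>1 \<le> k0\<close> \<open>c \<le> lap_start \<theta> x k0\<close> s_mono[of k0 k] hs(2)[of "Suc k"] last(2)
      by (auto simp: s_def)
    show ?thesis
    proof (rule lap_drift_nn_integral_ge[OF \<theta> bounds(3) hs(1)[OF bounds(1)] hs(1)[OF bounds(2)]
          \<open>0 \<le> c\<close> bounds(4,5)])
      fix \<alpha> assume "s k \<le> \<alpha>"
        "ennreal (1 - V) \<le> (\<integral>\<^sup>+ r. ?f k r * indicator {\<alpha> - c<..s (Suc k) - c} r \<partial>lborel)"
        "\<And>r. r \<in> {\<alpha> - c<..s (Suc k) - c} \<Longrightarrow> ?f k r \<le> ?g r"
        "(\<lambda>r. ?f k r * indicator {\<alpha> - c<..s (Suc k) - c} r) \<in> borel_measurable lborel"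
      then show ?thesis unfolding lap_part_def by blast
    qed
  qed
  then obtain A where A: "\<And>k. k \<in> ?K \<Longrightarrow> lap_part k (A k)" by metis
  define I where "I k = {A k - c<..s (Suc k) - c}" for k
  have "disjoint_family_on I ?K"
    unfolding disjoint_family_on_def
  proof (intro ballI impI)
    have "I k \<inter> I l = {}" if "k \<in> ?K" "l \<in> ?K" "k < l" for k l
      using s_mono[of "Suc k" l] A[of l] that by (auto simp: I_def lap_part_def)
    then show "I k \<inter> I l = {}" if "k \<in> ?K" "l \<in> ?K" "k \<noteq> l" for k l
      using that by (metis Int_commute linorder_neqE_nat)
  qed
  have "ennreal (real N * (1 - V)) = (\<Sum>k\<in>?K. ennreal (1 - V))"
    using V_less_1 by (simp add: ennreal_mult ennreal_of_nat_eq_real_of_nat)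
  also have "\<dots> \<le> (\<Sum>k\<in>?K. \<integral>\<^sup>+ r. ?f k r * indicator (I k) r \<partial>lborel)"
    using A by (intro sum_mono) (auto simp: I_def lap_part_def)
  also have "\<dots> \<le> (\<integral>\<^sup>+ r. ?g r \<partial>lborel)"
    using A by (intro nn_integral_disjoint_sum_le[OF _ \<open>disjoint_family_on I ?K\<close>])
      (auto simp: I_def lap_part_def)
  finally show ?thesis .
qed

text \<open>No Zeno behaviour: hitting times bounded by t would accumulate, so that arbitrarily
  many complete laps fit into one time window of length 1.\<close>

lemma hit_sum_unbounded:
  assumes \<theta>: "\<theta> \<in> space M"
  shows "\<exists>n. ereal t < hit_sum \<theta> x n"
proof (rule ccontr)
  assume "\<not> (\<exists>n. ereal t < hit_sum \<theta> x n)"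
  then have le_t: "hit_sum \<theta> x n \<le> ereal t" for n by (simp add: not_less)
  define s where "s = lap_start \<theta> x"
  have hs: "hit_sum \<theta> x n = ereal (s n)" for n
    using hit_sum_finite[OF \<theta> le_t] by (simp add: s_def)
  have "bdd_above (range s)" using le_t hs by (auto simp: bdd_above_def)
  then obtain m where m: "Sup (range s) - 1 < s m" and s_le: "\<And>n. s n \<le> Sup (range s)"
    using less_cSup_iff[of "range s" "Sup (range s) - 1"] by (auto intro: cSup_upper)
  define c where "c = s (Suc m)"
  have "s m \<le> c" using hit_sum_mono[OF \<theta>, of m "Suc m" x] hs by (simp add: c_def)
  define G where "G = (\<integral>\<^sup>+ r. lip01_norm (F (\<omega> r (\<omega> c \<theta>))) * indicator {0..1} r \<partial>lborel)"
  have laps_le: "ennreal (real N * (1 - V)) \<le> G" for N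
  proof -
    have "0 \<le> c" unfolding c_def by (rule lap_start_nonneg[OF \<theta> hs])
    moreover have "s (Suc m + N) \<le> c + 1" using s_le[of "Suc m + N"] m \<open>s m \<le> c\<close> by linarith
    ultimately show ?thesis
      unfolding G_def using laps_in_unit_window[OF \<theta> _ _ _ hs[of "Suc m + N"]] by (simp add: c_def s_def)
  qed
  obtain G' where G': "G = ennreal G'" "0 \<le> G'" using F_int[OF flow_in_space[OF \<theta>, of c]]
    by (cases G) (auto simp: G_def)
  moreover obtain N :: nat where "G' / (1 - V) < real N" using reals_Archimedean2 by blast
  then have "G' < real N * (1 - V)" using V_less_1 by (simp add: field_simps)
  moreover have "real N * (1 - V) \<le> G'" using laps_le[of N] G' by (simp add: ennreal_le_iff)
  ultimately show False by simp
qed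

lemma hits_eq:
  assumes \<theta>: "\<theta> \<in> space M" and "hit_sum \<theta> x k \<le> ereal t" "ereal t < hit_sum \<theta> x (Suc k)"
  shows "hits \<theta> x t = k"
  unfolding num_hits_def
proof (rule Greatest_equality)
  show "hit_sum \<theta> x k \<le> ereal t" by fact
  fix n assume "hit_sum \<theta> x n \<le> ereal t"
  then show "n \<le> k"
    using hit_sum_mono[OF \<theta>, of "Suc k" n x] assms(3) by (cases "n \<le> k") auto
qed

lemma hits_bracket:
  assumes \<theta>: "\<theta> \<in> space M" and "0 \<le> t"
  shows "hit_sum \<theta> x (hits \<theta> x t) \<le> ereal t" "ereal t < hit_sum \<theta> x (Suc (hits \<theta> x t))"
proof -
  define n where "n = (LEAST n. ereal t < hit_sum \<theta> x n)"
  have n: "ereal t < hit_sum \<theta> x n"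
    unfolding n_def using hit_sum_unbounded[OF \<theta>] by (rule LeastI_ex)
  have "n \<noteq> 0" using n \<open>0 \<le> t\<close> by (cases n) auto
  then obtain k where k: "n = Suc k" by (cases n) auto
  have "hit_sum \<theta> x k \<le> ereal t"
    using not_less_Least[of k "\<lambda>n. ereal t < hit_sum \<theta> x n"] k by (auto simp: n_def)
  moreover have "ereal t < hit_sum \<theta> x (Suc k)" using n k by simp
  ultimately show "hit_sum \<theta> x (hits \<theta> x t) \<le> ereal t" "ereal t < hit_sum \<theta> x (Suc (hits \<theta> x t))"
    using hits_eq[OF \<theta>] by auto
qed

lemma Vhat_eq_lap:
  assumes "\<theta> \<in> space M"
  shows "Vhat \<phi> \<omega> V t \<theta> x = of_int \<lfloor>x\<rfloor> + real (hits \<theta> x t) + lap \<theta> x (hits \<theta> x t) t"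
  using assms by (cases "hits \<theta> x t = 0")
    (simp_all add: Vhat_def Let_def lap_def lap_start_def lap_init_def flow_zero)

section \<open>Propagation of the bound from hit to hit\<close>

lemma lap_before_hit:
  assumes \<theta>: "\<theta> \<in> space M" and hs: "hit_sum \<theta> x (Suc m) = ereal a"
  shows "0 \<le> lap_start \<theta> x m" "lap_start \<theta> x m < a"
    "\<And>a'. lap_start \<theta> x m \<le> a' \<Longrightarrow> a' < a \<Longrightarrow> hits \<theta> x a' = m"
    "integral_solution (drift \<theta>) (lap \<theta> x m) (lap_start \<theta> x m) a"
    "lap \<theta> x m a = 1" "lap \<theta> x (Suc m) a = V"
proof -
  note hs_m = lap_start_less_Suc[OF \<theta> hs]
  show "0 \<le> lap_start \<theta> x m" by (rule lap_start_nonneg[OF \<theta> hs_m(1)])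
  show "lap_start \<theta> x m < a" by (rule hs_m(2))
  show "hits \<theta> x a' = m" if "lap_start \<theta> x m \<le> a'" "a' < a" for a'
    using hits_eq[OF \<theta>] hs_m hs that by simp
  show "integral_solution (drift \<theta>) (lap \<theta> x m) (lap_start \<theta> x m) a"
    using lap_solution[OF \<theta> hs_m(1)] hs_m(2) by simp
  have "hit_sum \<theta> x (Suc m) \<noteq> \<infinity>" using hs by simp
  then obtain b where "hit_sum \<theta> x (Suc m) = ereal b" "lap \<theta> x m b = 1"
    using lap_end[OF \<theta> hs_m(1)] by blast
  then show "lap \<theta> x m a = 1" using hs by simp
  show "lap \<theta> x (Suc m) a = V" using lap_at_start[OF \<theta> hs] by (simp add: lap_init_def)
qed

lemma lap_ongoing:
  assumes \<theta>: "\<theta> \<in> space M" and hs: "hit_sum \<theta> x n = ereal (lap_start \<theta> x n)"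
    and before: "lap_start \<theta> x n \<le> a" and next_hit: "ereal a < hit_sum \<theta> x (Suc n)"
  shows "\<And>a'. lap_start \<theta> x n \<le> a' \<Longrightarrow> a' \<le> a \<Longrightarrow> hits \<theta> x a' = n"
    and "lap \<theta> x n a < 1"
proof -
  show "hits \<theta> x a' = n" if "lap_start \<theta> x n \<le> a'" "a' \<le> a" for a'
  proof (rule hits_eq[OF \<theta>])
    show "hit_sum \<theta> x n \<le> ereal a'" using hs that by simp
    have "ereal a' \<le> ereal a" using that by simp
    then show "ereal a' < hit_sum \<theta> x (Suc n)" using next_hit by (rule order.strict_trans1)
  qed
  show "lap \<theta> x n a < 1"
  proof (cases "hit_sum \<theta> x (Suc n) = \<infinity>")
    case True
    then show ?thesis using lap_below_one_forever[OF \<theta> hs] before by simp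
  next
    case False
    then obtain b where "hit_sum \<theta> x (Suc n) = ereal b"
        "\<And>s. lap_start \<theta> x n \<le> s \<Longrightarrow> s < b \<Longrightarrow> lap \<theta> x n s < 1"
      using lap_end[OF \<theta> hs] by blast
    with next_hit before show ?thesis by simp
  qed
qed

lemma lap_before:
  assumes \<theta>: "\<theta> \<in> space M" and "0 \<le> t" "0 < a" "a \<le> t" and start: "lap_start \<theta> x (hits \<theta> x t) \<le> a"
  obtains a0 m where "0 \<le> a0" "a0 < a" "\<And>a'. a0 \<le> a' \<Longrightarrow> a' < a \<Longrightarrow> hits \<theta> x a' = m"
    "integral_solution (drift \<theta>) (lap \<theta> x m) a0 a"
    "lap_update V m (hits \<theta> x t) (lap \<theta> x m a) (lap \<theta> x (hits \<theta> x t) a)"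
    "lap_start \<theta> x (hits \<theta> x t) = a \<Longrightarrow> hits \<theta> x t = Suc m"
proof -
  define n where "n = hits \<theta> x t"
  have bracket: "hit_sum \<theta> x n \<le> ereal t" "ereal t < hit_sum \<theta> x (Suc n)"
    using hits_bracket[OF \<theta> \<open>0 \<le> t\<close>] by (simp_all add: n_def)
  have hs_n: "hit_sum \<theta> x n = ereal (lap_start \<theta> x n)" using hit_sum_finite(1)[OF \<theta> bracket(1)] .
  show ?thesis
  proof (cases "lap_start \<theta> x n = a")
    case True
    then have "n \<noteq> 0" using \<open>0 < a\<close> by (cases n) (auto simp: lap_start_def)
    then obtain m where m: "n = Suc m" by (cases n) auto
    with True hs_n have "hit_sum \<theta> x (Suc m) = ereal a" by simp
    note hit = lap_before_hit[OF \<theta> this]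
    show ?thesis
      by (rule that[of "lap_start \<theta> x m" m]) (use hit m in \<open>auto simp: lap_update_def n_def\<close>)
  next
    case False
    with start have before: "lap_start \<theta> x n < a" by (simp add: n_def)
    have "ereal a \<le> ereal t" using \<open>a \<le> t\<close> by simp
    then have "ereal a < hit_sum \<theta> x (Suc n)" using bracket(2) by (rule order.strict_trans1)
    note ongoing = lap_ongoing[OF \<theta> hs_n less_imp_le[OF before] this]
    show ?thesis
    proof (rule that[of "lap_start \<theta> x n" n])
      show "integral_solution (drift \<theta>) (lap \<theta> x n) (lap_start \<theta> x n) a"
        using lap_solution[OF \<theta> hs_n] before by simp
    qed (use ongoing before False lap_start_nonneg[OF \<theta> hs_n] in \<open>auto simp: lap_update_def n_def\<close>)
  qed
qed

lemma potential_bound_solutions: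
  assumes \<theta>: "\<theta> \<in> space M" and "a \<le> b"
    and g1: "integral_solution (drift \<theta>) g1 a b" and g2: "integral_solution (drift \<theta>) g2 a b"
    and "potential_bound V B H (g1 a) (g2 a)"
  shows "potential_bound V B H (g1 b) (g2 b)"
  using potential_bound_contract[OF V_less_1 assms(5)]
    integral_solutions_contract[OF drift_antimono[OF \<theta>] g1 g2 \<open>a \<le> b\<close>] by blast

lemma potential_bound_across_hit:
  assumes \<theta>: "\<theta> \<in> space M" and "a' \<le> a" "a \<le> t"
    and f: "integral_solution (drift \<theta>) f a' a" and g: "integral_solution (drift \<theta>) g a' a"
    and f': "integral_solution (drift \<theta>) f' a t" and g': "integral_solution (drift \<theta>) g' a t"
    and up1: "lap_update V m1 n1 (f a) (f' a)" and up2: "lap_update V m2 n2 (g a) (g' a)"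
    and bound: "potential_bound V B (H + int m1 - int m2) (f a') (g a')"
  shows "potential_bound V B (H + int n1 - int n2) (f' t) (g' t)"
proof -
  have "potential_bound V B (H + int m1 - int m2) (f a) (g a)"
    by (rule potential_bound_solutions[OF \<theta> \<open>a' \<le> a\<close> f g bound])
  from potential_bound_update[OF V_less_1 this up1 up2]
  have "potential_bound V B (H + int n1 - int n2) (f' a) (g' a)" by (simp add: algebra_simps)
  then show ?thesis by (rule potential_bound_solutions[OF \<theta> \<open>a \<le> t\<close> f' g'])
qed

text \<open>At the latest hit time a \<le> t of either trajectory, the pair is compared with an earlier
  time a' at which fewer hits have occurred.\<close>

lemma latest_hit_before:
  assumes \<theta>: "\<theta> \<in> space M" and "0 \<le> t" and "hits \<theta> x1 t \<noteq> 0 \<or> hits \<theta> x2 t \<noteq> 0"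
  obtains a' a m1 m2 where "a' \<le> a" "a \<le> t" "0 \<le> a'" "hits \<theta> x1 a' = m1" "hits \<theta> x2 a' = m2"
    "m1 + m2 < hits \<theta> x1 t + hits \<theta> x2 t"
    "integral_solution (drift \<theta>) (lap \<theta> x1 m1) a' a" "integral_solution (drift \<theta>) (lap \<theta> x2 m2) a' a"
    "integral_solution (drift \<theta>) (lap \<theta> x1 (hits \<theta> x1 t)) a t"
    "integral_solution (drift \<theta>) (lap \<theta> x2 (hits \<theta> x2 t)) a t"
    "lap_update V m1 (hits \<theta> x1 t) (lap \<theta> x1 m1 a) (lap \<theta> x1 (hits \<theta> x1 t) a)"
    "lap_update V m2 (hits \<theta> x2 t) (lap \<theta> x2 m2 a) (lap \<theta> x2 (hits \<theta> x2 t) a)"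
proof -
  define n1 n2 where "n1 = hits \<theta> x1 t" and "n2 = hits \<theta> x2 t"
  have hs1: "hit_sum \<theta> x1 n1 = ereal (lap_start \<theta> x1 n1)" "lap_start \<theta> x1 n1 \<le> t"
    unfolding n1_def by (rule hit_sum_finite[OF \<theta> hits_bracket(1)[OF \<theta> \<open>0 \<le> t\<close>]])+
  have hs2: "hit_sum \<theta> x2 n2 = ereal (lap_start \<theta> x2 n2)" "lap_start \<theta> x2 n2 \<le> t"
    unfolding n2_def by (rule hit_sum_finite[OF \<theta> hits_bracket(1)[OF \<theta> \<open>0 \<le> t\<close>]])+
  define a where "a = max (lap_start \<theta> x1 n1) (lap_start \<theta> x2 n2)"
  have "0 < a" using assms(3) lap_start_pos[OF \<theta> _ hs1(1)] lap_start_pos[OF \<theta> _ hs2(1)]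
    by (auto simp: a_def less_max_iff_disj n1_def n2_def)
  have "a \<le> t" using hs1 hs2 by (simp add: a_def)
  have start: "lap_start \<theta> x1 n1 \<le> a" "lap_start \<theta> x2 n2 \<le> a" by (simp_all add: a_def)
  obtain a1 m1 where a1: "0 \<le> a1" "a1 < a" "\<And>a'. a1 \<le> a' \<Longrightarrow> a' < a \<Longrightarrow> hits \<theta> x1 a' = m1"
      and sol1: "integral_solution (drift \<theta>) (lap \<theta> x1 m1) a1 a"
      and up1: "lap_update V m1 n1 (lap \<theta> x1 m1 a) (lap \<theta> x1 n1 a)"
      and jump1: "lap_start \<theta> x1 n1 = a \<Longrightarrow> n1 = Suc m1"
    by (rule lap_before[OF \<theta> \<open>0 \<le> t\<close> \<open>0 < a\<close> \<open>a \<le> t\<close> start(1)[unfolded n1_def], folded n1_def])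
      (rule that)
  obtain a2 m2 where a2: "0 \<le> a2" "a2 < a" "\<And>a'. a2 \<le> a' \<Longrightarrow> a' < a \<Longrightarrow> hits \<theta> x2 a' = m2"
      and sol2: "integral_solution (drift \<theta>) (lap \<theta> x2 m2) a2 a"
      and up2: "lap_update V m2 n2 (lap \<theta> x2 m2 a) (lap \<theta> x2 n2 a)"
      and jump2: "lap_start \<theta> x2 n2 = a \<Longrightarrow> n2 = Suc m2"
    by (rule lap_before[OF \<theta> \<open>0 \<le> t\<close> \<open>0 < a\<close> \<open>a \<le> t\<close> start(2)[unfolded n2_def], folded n2_def])
      (rule that)
  have "m1 \<le> n1" "m2 \<le> n2" using up1 up2 unfolding lap_update_def by auto
  moreover have "lap_start \<theta> x1 n1 = a \<or> lap_start \<theta> x2 n2 = a" by (simp add: a_def max_def)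
  ultimately have "m1 + m2 < n1 + n2" using jump1 jump2 by auto
  moreover have "integral_solution (drift \<theta>) (lap \<theta> x1 n1) a t"
    "integral_solution (drift \<theta>) (lap \<theta> x2 n2) a t"
    using integral_solution_subinterval[OF lap_solution[OF \<theta> hs1(1) hs1(2)], of a t]
      integral_solution_subinterval[OF lap_solution[OF \<theta> hs2(1) hs2(2)], of a t] start \<open>a \<le> t\<close>
    by simp_all
  moreover have "integral_solution (drift \<theta>) (lap \<theta> x1 m1) (max a1 a2) a"
    "integral_solution (drift \<theta>) (lap \<theta> x2 m2) (max a1 a2) a"
    using integral_solution_subinterval[OF sol1, of "max a1 a2" a]
      integral_solution_subinterval[OF sol2, of "max a1 a2" a] a1 a2 by auto
  ultimately show ?thesis
    using that[of "max a1 a2" a m1 m2] a1 a2 up1 up2 \<open>a \<le> t\<close> by (simp add: n1_def n2_def)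
qed

lemma potential_bound_hits:
  assumes \<theta>: "\<theta> \<in> space M" and "0 \<le> t"
    and base: "potential_bound V B (\<lfloor>x1\<rfloor> - \<lfloor>x2\<rfloor>) (frac x1) (frac x2)"
  shows "potential_bound V B (\<lfloor>x1\<rfloor> - \<lfloor>x2\<rfloor> + int (hits \<theta> x1 t) - int (hits \<theta> x2 t))
           (lap \<theta> x1 (hits \<theta> x1 t) t) (lap \<theta> x2 (hits \<theta> x2 t) t)"
  using \<open>0 \<le> t\<close>
proof (induction "hits \<theta> x1 t + hits \<theta> x2 t" arbitrary: t rule: less_induct)
  case less
  show ?case
  proof (cases "hits \<theta> x1 t = 0 \<and> hits \<theta> x2 t = 0")
    case True
    have "hit_sum \<theta> x 0 = ereal 0" for x by (simp add: zero_ereal_def)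
    note lap0 = lap_solution[OF \<theta> this less.prems] lap_at_start[OF \<theta> this]
    show ?thesis
      using potential_bound_solutions[OF \<theta> less.prems lap0(1) lap0(1)] base lap0(2) True
      by (simp add: lap_init_def)
  next
    case False
    then have "hits \<theta> x1 t \<noteq> 0 \<or> hits \<theta> x2 t \<noteq> 0" by simp
    then obtain a' a m1 m2 where "a' \<le> a" "a \<le> t" "0 \<le> a'" "hits \<theta> x1 a' = m1" "hits \<theta> x2 a' = m2"
        "m1 + m2 < hits \<theta> x1 t + hits \<theta> x2 t"
        and sol: "integral_solution (drift \<theta>) (lap \<theta> x1 m1) a' a"
          "integral_solution (drift \<theta>) (lap \<theta> x2 m2) a' a"
          "integral_solution (drift \<theta>) (lap \<theta> x1 (hits \<theta> x1 t)) a t"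
          "integral_solution (drift \<theta>) (lap \<theta> x2 (hits \<theta> x2 t)) a t"
        and up: "lap_update V m1 (hits \<theta> x1 t) (lap \<theta> x1 m1 a) (lap \<theta> x1 (hits \<theta> x1 t) a)"
          "lap_update V m2 (hits \<theta> x2 t) (lap \<theta> x2 m2 a) (lap \<theta> x2 (hits \<theta> x2 t) a)"
      by (rule latest_hit_before[OF \<theta> less.prems]) (rule that)
    then have "potential_bound V B (\<lfloor>x1\<rfloor> - \<lfloor>x2\<rfloor> + int m1 - int m2) (lap \<theta> x1 m1 a') (lap \<theta> x2 m2 a')"
      using less.hyps[of a'] by simp
    then show ?thesis
      by (rule potential_bound_across_hit[OF \<theta> \<open>a' \<le> a\<close> \<open>a \<le> t\<close> sol up])
  qed
qed

end

theorem proposition5p1: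
  fixes M :: "'a measure" and \<omega> :: "real \<Rightarrow> 'a \<Rightarrow> 'a"
    and F :: "'a \<Rightarrow> real \<Rightarrow> real" and \<phi> :: "real \<Rightarrow> 'a \<Rightarrow> real \<Rightarrow> real"
    and Vr :: real
  assumes mds: "metric_dynamical_system M \<omega>"
    and Vr: "0 \<le> Vr" "Vr < 1"
    and F_meas: "(\<lambda>(\<theta>, x). F \<theta> x) \<in> borel_measurable (M \<Otimes>\<^sub>M borel)"
    and F_int: "\<And>\<theta>. \<theta> \<in> space M \<Longrightarrow>
                  (\<integral>\<^sup>+ t\<in>{0..1}. lip01_norm (F (\<omega> t \<theta>)) \<partial>lborel) < \<infinity>"
    and sol_int: "\<And>\<theta> x t. \<theta> \<in> space M \<Longrightarrow> 0 \<le> t \<Longrightarrow>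
                  (\<lambda>s. F (\<omega> s \<theta>) (\<phi> s \<theta> x)) absolutely_integrable_on {0..t}"
    and sol_eq: "\<And>\<theta> x t. \<theta> \<in> space M \<Longrightarrow> 0 \<le> t \<Longrightarrow>
                  \<phi> t \<theta> x = x + integral {0..t} (\<lambda>s. F (\<omega> s \<theta>) (\<phi> s \<theta> x))"
    and F_mono: "\<And>\<theta> x y. \<theta> \<in> space M \<Longrightarrow> x \<le> y \<Longrightarrow> F \<theta> y \<le> F \<theta> x"
  shows "\<forall>t\<ge>0. \<forall>\<theta>\<in>space M. \<forall>x1 x2. x1 \<le> x2 \<longrightarrow>
           Vhat \<phi> \<omega> Vr t \<theta> x1 \<le> Vhat \<phi> \<omega> Vr t \<theta> x2 + (Vr / (1 - Vr) + 1)"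
proof (intro allI impI ballI)
  interpret lifted_semiflow M \<omega> F \<phi> Vr
    using assms by unfold_locales
  fix t x1 x2 :: real and \<theta>
  assume t: "0 \<le> t" and \<theta>: "\<theta> \<in> space M" and "x1 \<le> x2"
  obtain B where B: "real_of_int B \<le> Vr / (1 - Vr) + 1"
      "potential_bound Vr B (\<lfloor>x1\<rfloor> - \<lfloor>x2\<rfloor>) (frac x1) (frac x2)"
    using potential_bound_initial[OF Vr \<open>x1 \<le> x2\<close>] by blast
  have "real_of_int (\<lfloor>x1\<rfloor> - \<lfloor>x2\<rfloor> + int (hits \<theta> x1 t) - int (hits \<theta> x2 t))
      + (lap \<theta> x1 (hits \<theta> x1 t) t - lap \<theta> x2 (hits \<theta> x2 t) t) \<le> real_of_int B"
    using potential_bound_le[OF Vr potential_bound_hits[OF \<theta> t B(2)]] .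
  then show "Vhat \<phi> \<omega> Vr t \<theta> x1 \<le> Vhat \<phi> \<omega> Vr t \<theta> x2 + (Vr / (1 - Vr) + 1)"
    using B(1) by (simp add: Vhat_eq_lap[OF \<theta>])
qed

end
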